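(* There is an algorithm which, given a skew-merged permutation of size $n$, computes in $O(n)$ time the type (NE, NW, SW, SE, or central) of each of its elements.
   Context: Permutations are identified with their sets of points $(i,\sigma(i))$ with the usual left/right/above/below relations. A permutation is skew-merged if its points can be partitioned into an increasing and a decreasing subsequence (equivalently, it avoids $3412$ and $2143$). An element of a skew-merged permutation is of type NE if it plays the role of the $3$ in an occurrence of $213$; NW if it plays the $3$ in an occurrence of $312$; SW if it plays the $1$ in an occurrence of $132$; SE if it plays the $1$ in an occurrence of $231$; it is central if it has none of these types. (The four non-central types are pairwise disjoint.) *)

theory Defs
  imports "HOL-Combinatorics.Permutations"
begin

text \<open>A permutation of size n is a bijection sigma of {1..n}; its elements are the
points (i, sigma i), identified by their position i.\<close>

definition skew_merged :: "nat \<Rightarrow> (nat \<Rightarrow> nat) \<Rightarrow> bool" where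
  "skew_merged n \<sigma> \<longleftrightarrow>
     (\<exists>A \<subseteq> {1..n}.
        (\<forall>i\<in>A. \<forall>j\<in>A. i < j \<longrightarrow> \<sigma> i < \<sigma> j) \<and>
        (\<forall>i\<in>{1..n} - A. \<forall>j\<in>{1..n} - A. i < j \<longrightarrow> \<sigma> i > \<sigma> j))"

text \<open>NE: the 3 of a 213;  NW: the 3 of a 312;  SW: the 1 of a 132;  SE: the 1 of a 231.\<close>

definition is_NE :: "nat \<Rightarrow> (nat \<Rightarrow> nat) \<Rightarrow> nat \<Rightarrow> bool" where
  "is_NE n \<sigma> c \<longleftrightarrow> (\<exists>a\<in>{1..n}. \<exists>b\<in>{1..n}. a < b \<and> b < c \<and> \<sigma> b < \<sigma> a \<and> \<sigma> a < \<sigma> c)"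

definition is_NW :: "nat \<Rightarrow> (nat \<Rightarrow> nat) \<Rightarrow> nat \<Rightarrow> bool" where
  "is_NW n \<sigma> a \<longleftrightarrow> (\<exists>b\<in>{1..n}. \<exists>c\<in>{1..n}. a < b \<and> b < c \<and> \<sigma> b < \<sigma> c \<and> \<sigma> c < \<sigma> a)"

definition is_SW :: "nat \<Rightarrow> (nat \<Rightarrow> nat) \<Rightarrow> nat \<Rightarrow> bool" where
  "is_SW n \<sigma> a \<longleftrightarrow> (\<exists>b\<in>{1..n}. \<exists>c\<in>{1..n}. a < b \<and> b < c \<and> \<sigma> a < \<sigma> c \<and> \<sigma> c < \<sigma> b)"

definition is_SE :: "nat \<Rightarrow> (nat \<Rightarrow> nat) \<Rightarrow> nat \<Rightarrow> bool" where
  "is_SE n \<sigma> c \<longleftrightarrow> (\<exists>a\<in>{1..n}. \<exists>b\<in>{1..n}. a < b \<and> b < c \<and> \<sigma> c < \<sigma> a \<and> \<sigma> a < \<sigma> b)"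

datatype etype = NE | NW | SW | SE | Central

text \<open>The four non-central types are pairwise disjoint (for skew-merged permutations),
so this if-chain returns the unique type.\<close>
definition elem_type :: "nat \<Rightarrow> (nat \<Rightarrow> nat) \<Rightarrow> nat \<Rightarrow> etype" where
  "elem_type n \<sigma> i =
     (if is_NE n \<sigma> i then NE else if is_NW n \<sigma> i then NW else if is_SW n \<sigma> i then SW
      else if is_SE n \<sigma> i then SE else Central)"

fun etype_code :: "etype \<Rightarrow> int" where
  "etype_code Central = 0" | "etype_code NE = 1" | "etype_code NW = 2"
| "etype_code SW = 3" | "etype_code SE = 4"

text \<open>Each executed command costs one time unit
(expressions are of program-bounded size, so this is unit cost up to a constant).\<close>

type_synonym vname = string
type_synonym state = "(vname \<Rightarrow> int) \<times> (vname \<Rightarrow> int \<Rightarrow> int)"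

datatype aexp = N int | V vname | Plus aexp aexp | Minus aexp aexp | Get vname aexp

datatype bexp = Less aexp aexp | Eq aexp aexp | Not bexp | And bexp bexp

datatype com = Skip | Assign vname aexp | ASet vname aexp aexp | Seq com com
  | If bexp com com | While bexp com

fun aval :: "aexp \<Rightarrow> state \<Rightarrow> int" where
  "aval (N k) s = k"
| "aval (V x) s = fst s x"
| "aval (Plus a b) s = aval a s + aval b s"
| "aval (Minus a b) s = aval a s - aval b s"
| "aval (Get x a) s = snd s x (aval a s)"

fun bval :: "bexp \<Rightarrow> state \<Rightarrow> bool" where
  "bval (Less a b) s = (aval a s < aval b s)"
| "bval (Eq a b) s = (aval a s = aval b s)"
| "bval (Not b) s = (\<not> bval b s)"
| "bval (And b1 b2) s = (bval b1 s \<and> bval b2 s)"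

inductive exec :: "com \<Rightarrow> state \<Rightarrow> nat \<Rightarrow> state \<Rightarrow> bool" where
  Skip: "exec Skip s 1 s"
| Assign: "exec (Assign x a) s 1 ((fst s)(x := aval a s), snd s)"
| ASet: "exec (ASet x i a) s 1 (fst s, (snd s)(x := (snd s x)(aval i s := aval a s)))"
| Seq: "exec c1 s t1 s1 \<Longrightarrow> exec c2 s1 t2 s2 \<Longrightarrow> exec (Seq c1 c2) s (t1 + t2 + 1) s2"
| IfT: "bval b s \<Longrightarrow> exec c1 s t s' \<Longrightarrow> exec (If b c1 c2) s (t + 1) s'"
| IfF: "\<not> bval b s \<Longrightarrow> exec c2 s t s' \<Longrightarrow> exec (If b c1 c2) s (t + 1) s'"
| WhileF: "\<not> bval b s \<Longrightarrow> exec (While b c) s 1 s"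
| WhileT: "bval b s \<Longrightarrow> exec c s t1 s1 \<Longrightarrow> exec (While b c) s1 t2 s2 \<Longrightarrow>
           exec (While b c) s (t1 + t2 + 1) s2"

definition input_ok :: "nat \<Rightarrow> (nat \<Rightarrow> nat) \<Rightarrow> state \<Rightarrow> bool" where
  "input_ok n \<sigma> s \<longleftrightarrow> fst s ''n'' = int n \<and> (\<forall>i\<in>{1..n}. snd s ''in'' (int i) = int (\<sigma> i))"

definition output_ok :: "nat \<Rightarrow> (nat \<Rightarrow> nat) \<Rightarrow> state \<Rightarrow> bool" where
  "output_ok n \<sigma> s \<longleftrightarrow> (\<forall>i\<in>{1..n}. snd s ''out'' (int i) = etype_code (elem_type n \<sigma> i))"

end

theory Submission
  imports Defs
begin

text \<open>An element c is NE iff some b < c has, to its left, a value strictly between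
\<sigma> b and \<sigma> c. Writing s(b) for the least value to the left of b that exceeds \<sigma> b
(n + 1 if there is none), c is therefore NE iff \<sigma> c exceeds the minimum of s over the
positions before c; dually, with p(b) the greatest value to the left of b below \<sigma> b
(0 if none), c is SE iff \<sigma> c lies below the maximum of p before c.

All s(b) and p(b) are read off in one right-to-left sweep over a doubly linked list of
the values 0, ..., n + 1: when position b is visited, the list holds exactly the values
to the left of b together with the two sentinels, so the neighbours of \<sigma> b are s(b)
and p(b), and \<sigma> b is then unlinked in constant time. A left-to-right sweep with a
running minimum and maximum decides NE and SE, and NW and SW are the NE and SE elements
of the reversed permutation. Every sweep spends constant time per position.\<close>

section \<open>Successors and predecessors in a linear order\<close>

definition is_succ_in :: "'a::linorder set \<Rightarrow> 'a \<Rightarrow> 'a \<Rightarrow> bool" where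
  "is_succ_in S v w \<longleftrightarrow> w \<in> S \<and> v < w \<and> (\<forall>u\<in>S. v < u \<longrightarrow> w \<le> u)"

definition is_pred_in :: "'a::linorder set \<Rightarrow> 'a \<Rightarrow> 'a \<Rightarrow> bool" where
  "is_pred_in S v w \<longleftrightarrow> w \<in> S \<and> w < v \<and> (\<forall>u\<in>S. u < v \<longrightarrow> u \<le> w)"

lemma is_succ_in_unique: "is_succ_in S v w \<Longrightarrow> is_succ_in S v w' \<Longrightarrow> w = w'"
  unfolding is_succ_in_def by (blast intro: order.antisym)

lemma is_pred_in_unique: "is_pred_in S v w \<Longrightarrow> is_pred_in S v w' \<Longrightarrow> w = w'"
  unfolding is_pred_in_def by (blast intro: order.antisym)

lemma is_succ_in_iff_is_pred_in:
  "v \<in> S \<Longrightarrow> w \<in> S \<Longrightarrow> is_succ_in S v w \<longleftrightarrow> is_pred_in S w v"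
  unfolding is_succ_in_def is_pred_in_def by (meson not_le)

lemma is_succ_in_Diff: "is_succ_in S v w \<Longrightarrow> w \<noteq> x \<Longrightarrow> is_succ_in (S - {x}) v w"
  unfolding is_succ_in_def by auto

lemma is_pred_in_Diff: "is_pred_in S v w \<Longrightarrow> w \<noteq> x \<Longrightarrow> is_pred_in (S - {x}) v w"
  unfolding is_pred_in_def by auto

lemma is_succ_in_Diff_skip: "is_succ_in S v x \<Longrightarrow> is_succ_in S x y \<Longrightarrow> is_succ_in (S - {x}) v y"
  unfolding is_succ_in_def by auto

lemma is_pred_in_Diff_skip: "is_pred_in S v x \<Longrightarrow> is_pred_in S x y \<Longrightarrow> is_pred_in (S - {x}) v y"
  unfolding is_pred_in_def by auto

lemma is_succ_in_Min:
  assumes "finite S" "u \<in> S" "v < u"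
  shows "is_succ_in S v (Min {w \<in> S. v < w})"
proof -
  have "finite {w \<in> S. v < w}" "{w \<in> S. v < w} \<noteq> {}"
    using assms by auto
  from Min_in[OF this] Min_le[OF this(1)] show ?thesis
    unfolding is_succ_in_def by auto
qed

lemma is_pred_in_Max:
  assumes "finite S" "u \<in> S" "u < v"
  shows "is_pred_in S v (Max {w \<in> S. w < v})"
proof -
  have "finite {w \<in> S. w < v}" "{w \<in> S. w < v} \<noteq> {}"
    using assms by auto
  from Max_in[OF this] Max_ge[OF this(1)] show ?thesis
    unfolding is_pred_in_def by auto
qed

definition linked_list :: "'a::linorder set \<Rightarrow> 'a \<Rightarrow> 'a \<Rightarrow> ('a \<Rightarrow> 'a) \<Rightarrow> ('a \<Rightarrow> 'a) \<Rightarrow> bool" where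
  "linked_list S lo hi nxt prv \<longleftrightarrow>
     (\<forall>v\<in>S - {hi}. is_succ_in S v (nxt v)) \<and> (\<forall>v\<in>S - {lo}. is_pred_in S v (prv v))"

lemma linked_list_nxt_eq_iff:
  assumes L: "linked_list S lo hi nxt prv" and v: "v \<in> S - {hi}" and x: "x \<in> S - {lo}"
  shows "nxt v = x \<longleftrightarrow> v = prv x"
proof -
  have succ: "is_succ_in S v (nxt v)" and pred: "is_pred_in S x (prv x)"
    using L v x unfolding linked_list_def by auto
  show ?thesis
  proof
    assume "nxt v = x"
    then have "is_pred_in S x v"
      using succ is_succ_in_iff_is_pred_in[of v S x] v x by auto
    then show "v = prv x"
      using pred is_pred_in_unique by blast
  next
    assume "v = prv x"
    then have "is_succ_in S v x"
      using pred is_succ_in_iff_is_pred_in[of v S x] x unfolding is_pred_in_def by auto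
    then show "nxt v = x"
      using succ is_succ_in_unique by blast
  qed
qed

lemma linked_list_delete:
  assumes L: "linked_list S lo hi nxt prv" and x: "x \<in> S" "x \<noteq> lo" "x \<noteq> hi"
  shows "linked_list (S - {x}) lo hi (nxt(prv x := nxt x)) (prv(nxt x := prv x))"
proof -
  have succ: "\<And>v. v \<in> S - {hi} \<Longrightarrow> is_succ_in S v (nxt v)"
    and pred: "\<And>v. v \<in> S - {lo} \<Longrightarrow> is_pred_in S v (prv v)"
    using L unfolding linked_list_def by auto
  have "is_succ_in (S - {x}) v ((nxt(prv x := nxt x)) v)" if v: "v \<in> S - {x} - {hi}" for v
    using v x succ[of v] succ[of x] linked_list_nxt_eq_iff[OF L, of v x]
      is_succ_in_Diff[of S v "nxt v" x] is_succ_in_Diff_skip[of S v x "nxt x"]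
    by (cases "v = prv x") auto
  moreover have "is_pred_in (S - {x}) v ((prv(nxt x := prv x)) v)" if v: "v \<in> S - {x} - {lo}" for v
    using v x pred[of v] pred[of x] linked_list_nxt_eq_iff[OF L, of x v]
      is_pred_in_Diff[of S v "prv v" x] is_pred_in_Diff_skip[of S v x "prv x"]
    by (cases "v = nxt x") auto
  ultimately show ?thesis
    unfolding linked_list_def by blast
qed

lemma linked_list_upto:
  assumes "nxt 0 = 1" "prv (int n + 1) = int n"
    and "\<forall>b\<in>{1..n}. nxt (int b) = int b + 1 \<and> prv (int b) = int b - 1"
  shows "linked_list {0..int n + 1} 0 (int n + 1) nxt prv"
proof -
  have cases: "w = 0 \<or> w = int n + 1 \<or> w \<in> int ` {1..n}" if "w \<in> {0..int n + 1}" for w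
    using that by (force simp: image_int_atLeastAtMost)
  have "nxt w = w + 1" if "w \<in> {0..<int n + 1}" for w
    using cases[of w] that assms by auto
  moreover have "prv w = w - 1" if "w \<in> {0<..int n + 1}" for w
    using cases[of w] that assms by auto
  ultimately show ?thesis
    unfolding linked_list_def is_succ_in_def is_pred_in_def by auto
qed

section \<open>Left successors, left predecessors and element types\<close>

definition left_succ :: "nat \<Rightarrow> (nat \<Rightarrow> nat) \<Rightarrow> nat \<Rightarrow> int" where
  "left_succ n \<tau> b = Min (insert (int n + 1) ((\<lambda>a. int (\<tau> a)) ` {a \<in> {1..<b}. \<tau> b < \<tau> a}))"

definition left_pred :: "nat \<Rightarrow> (nat \<Rightarrow> nat) \<Rightarrow> nat \<Rightarrow> int" where
  "left_pred n \<tau> b = Max (insert 0 ((\<lambda>a. int (\<tau> a)) ` {a \<in> {1..<b}. \<tau> a < \<tau> b}))"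

lemma left_succ_less_iff:
  "x \<le> int n + 1 \<Longrightarrow> left_succ n \<tau> b < x \<longleftrightarrow> (\<exists>a\<in>{1..<b}. \<tau> b < \<tau> a \<and> int (\<tau> a) < x)"
  unfolding left_succ_def by (subst Min_less_iff) auto

lemma less_left_pred_iff:
  "0 \<le> x \<Longrightarrow> x < left_pred n \<tau> b \<longleftrightarrow> (\<exists>a\<in>{1..<b}. \<tau> a < \<tau> b \<and> x < int (\<tau> a))"
  unfolding left_pred_def by (subst Max_gr_iff) auto

lemma is_NE_iff_left_succ:
  assumes "C \<le> n" "\<tau> C \<le> n"
  shows "is_NE n \<tau> C \<longleftrightarrow> (\<exists>b\<in>{1..<C}. left_succ n \<tau> b < int (\<tau> C))"
proof
  assume "is_NE n \<tau> C"
  then obtain a b where "a \<in> {1..<b}" "b \<in> {1..<C}" "\<tau> b < \<tau> a" "\<tau> a < \<tau> C"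
    unfolding is_NE_def by auto
  then show "\<exists>b\<in>{1..<C}. left_succ n \<tau> b < int (\<tau> C)"
    using assms(2) by (intro bexI[of _ b]) (auto simp: left_succ_less_iff)
next
  assume "\<exists>b\<in>{1..<C}. left_succ n \<tau> b < int (\<tau> C)"
  then obtain a b where "a \<in> {1..<b}" "b \<in> {1..<C}" "\<tau> b < \<tau> a" "\<tau> a < \<tau> C"
    using assms(2) by (auto simp: left_succ_less_iff)
  then show "is_NE n \<tau> C"
    unfolding is_NE_def using assms(1) by (intro bexI[of _ a] bexI[of _ b]) auto
qed

lemma is_SE_iff_left_pred:
  assumes "C \<le> n"
  shows "is_SE n \<tau> C \<longleftrightarrow> (\<exists>b\<in>{1..<C}. int (\<tau> C) < left_pred n \<tau> b)"
proof
  assume "is_SE n \<tau> C"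
  then obtain a b where "a \<in> {1..<b}" "b \<in> {1..<C}" "\<tau> C < \<tau> a" "\<tau> a < \<tau> b"
    unfolding is_SE_def by auto
  then show "\<exists>b\<in>{1..<C}. int (\<tau> C) < left_pred n \<tau> b"
    by (intro bexI[of _ b]) (auto simp: less_left_pred_iff)
next
  assume "\<exists>b\<in>{1..<C}. int (\<tau> C) < left_pred n \<tau> b"
  then obtain a b where "a \<in> {1..<b}" "b \<in> {1..<C}" "\<tau> C < \<tau> a" "\<tau> a < \<tau> b"
    by (auto simp: less_left_pred_iff)
  then show "is_SE n \<tau> C"
    unfolding is_SE_def using assms by (intro bexI[of _ a] bexI[of _ b]) auto
qed

lemma is_NW_iff_is_NE_reverse:
  assumes "a \<in> {1..n}"
  shows "is_NW n \<sigma> a \<longleftrightarrow> is_NE n (\<lambda>i. \<sigma> (n + 1 - i)) (n + 1 - a)"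
proof
  assume "is_NW n \<sigma> a"
  then obtain b c where "b \<in> {1..n}" "c \<in> {1..n}" "a < b" "b < c" "\<sigma> b < \<sigma> c" "\<sigma> c < \<sigma> a"
    unfolding is_NW_def by blast
  then show "is_NE n (\<lambda>i. \<sigma> (n + 1 - i)) (n + 1 - a)"
    unfolding is_NE_def using assms by (intro bexI[of _ "n + 1 - c"] bexI[of _ "n + 1 - b"]) auto
next
  assume "is_NE n (\<lambda>i. \<sigma> (n + 1 - i)) (n + 1 - a)"
  then obtain x y where "x \<in> {1..n}" "y \<in> {1..n}" "x < y" "y < n + 1 - a"
      "\<sigma> (n + 1 - y) < \<sigma> (n + 1 - x)" "\<sigma> (n + 1 - x) < \<sigma> (n + 1 - (n + 1 - a))"
    unfolding is_NE_def by blast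
  moreover have "n + 1 - (n + 1 - a) = a"
    using assms by auto
  ultimately show "is_NW n \<sigma> a"
    unfolding is_NW_def using assms by (intro bexI[of _ "n + 1 - x"] bexI[of _ "n + 1 - y"]) auto
qed

lemma is_SW_iff_is_SE_reverse:
  assumes "a \<in> {1..n}"
  shows "is_SW n \<sigma> a \<longleftrightarrow> is_SE n (\<lambda>i. \<sigma> (n + 1 - i)) (n + 1 - a)"
proof
  assume "is_SW n \<sigma> a"
  then obtain b c where "b \<in> {1..n}" "c \<in> {1..n}" "a < b" "b < c" "\<sigma> a < \<sigma> c" "\<sigma> c < \<sigma> b"
    unfolding is_SW_def by blast
  then show "is_SE n (\<lambda>i. \<sigma> (n + 1 - i)) (n + 1 - a)"
    unfolding is_SE_def using assms by (intro bexI[of _ "n + 1 - c"] bexI[of _ "n + 1 - b"]) auto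
next
  assume "is_SE n (\<lambda>i. \<sigma> (n + 1 - i)) (n + 1 - a)"
  then obtain x y where "x \<in> {1..n}" "y \<in> {1..n}" "x < y" "y < n + 1 - a"
      "\<sigma> (n + 1 - (n + 1 - a)) < \<sigma> (n + 1 - x)" "\<sigma> (n + 1 - x) < \<sigma> (n + 1 - y)"
    unfolding is_SE_def by blast
  moreover have "n + 1 - (n + 1 - a) = a"
    using assms by auto
  ultimately show "is_SW n \<sigma> a"
    unfolding is_SW_def using assms by (intro bexI[of _ "n + 1 - x"] bexI[of _ "n + 1 - y"]) auto
qed

lemma bij_betw_reverse: "bij_betw (\<lambda>i. n + 1 - i) {1..n} {1..(n::nat)}"
  by (rule bij_betw_byWitness[where f' = "\<lambda>i. n + 1 - i"]) auto

definition prefix_values :: "nat \<Rightarrow> (nat \<Rightarrow> nat) \<Rightarrow> nat \<Rightarrow> int set" where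
  "prefix_values n \<tau> b = insert 0 (insert (int n + 1) ((\<lambda>i. int (\<tau> i)) ` {1..b}))"

lemma left_succ_eq_Min_prefix_values:
  assumes "\<tau> b \<le> n"
  shows "left_succ n \<tau> b = Min {w \<in> prefix_values n \<tau> b. int (\<tau> b) < w}"
proof -
  have "{w \<in> prefix_values n \<tau> b. int (\<tau> b) < w} =
      insert (int n + 1) ((\<lambda>a. int (\<tau> a)) ` {a \<in> {1..<b}. \<tau> b < \<tau> a})"
    using assms unfolding prefix_values_def by (auto simp: order.order_iff_strict)
  then show ?thesis
    unfolding left_succ_def by simp
qed

lemma left_pred_eq_Max_prefix_values:
  assumes "\<tau> b \<in> {1..n}"
  shows "left_pred n \<tau> b = Max {w \<in> prefix_values n \<tau> b. w < int (\<tau> b)}"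
proof -
  have "{w \<in> prefix_values n \<tau> b. w < int (\<tau> b)} =
      insert 0 ((\<lambda>a. int (\<tau> a)) ` {a \<in> {1..<b}. \<tau> a < \<tau> b})"
    using assms unfolding prefix_values_def by (auto simp: order.order_iff_strict)
  then show ?thesis
    unfolding left_pred_def by simp
qed

lemma prefix_values_pred:
  assumes bij: "bij_betw \<tau> {1..n} {1..n}" and b: "b \<in> {1..n}"
  shows "prefix_values n \<tau> (b - 1) = prefix_values n \<tau> b - {int (\<tau> b)}"
proof -
  have "\<tau> b \<in> {1..n}"
    using bij b by (auto dest: bij_betwE)
  moreover have "int (\<tau> b) \<notin> (\<lambda>i. int (\<tau> i)) ` {1..b - 1}"
  proof
    assume "int (\<tau> b) \<in> (\<lambda>i. int (\<tau> i)) ` {1..b - 1}"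
    then obtain i where i: "i \<in> {1..b - 1}" "\<tau> b = \<tau> i"
      by auto
    moreover have "i \<in> {1..n}"
      using i(1) b by auto
    ultimately have "b = i"
      using inj_onD[OF bij_betw_imp_inj_on[OF bij], of b i] b by simp
    then show False
      using i b by auto
  qed
  moreover have "{1..b} = insert b {1..b - 1}"
    using b by auto
  ultimately show ?thesis
    unfolding prefix_values_def by (simp add: insert_Diff_if)
qed

lemma prefix_values_all:
  assumes "bij_betw \<tau> {1..n} {1..n}"
  shows "prefix_values n \<tau> n = {0..int n + 1}"
proof -
  have "(\<lambda>i. int (\<tau> i)) ` {1..n} = int ` {1..n}"
    using bij_betw_imp_surj_on[OF assms] by (metis image_image)
  then show ?thesis
    unfolding prefix_values_def by (auto simp: image_int_atLeastAtMost)
qed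

lemma prefix_values_links:
  assumes bij: "bij_betw \<tau> {1..n} {1..n}" and b: "b \<in> {1..n}"
    and L: "linked_list (prefix_values n \<tau> b) 0 (int n + 1) nxt prv"
  shows "nxt (int (\<tau> b)) = left_succ n \<tau> b" "prv (int (\<tau> b)) = left_pred n \<tau> b"
proof -
  have \<tau>b: "\<tau> b \<in> {1..n}"
    using bij b by (auto dest: bij_betwE)
  have mem: "int (\<tau> b) \<in> prefix_values n \<tau> b" "0 \<in> prefix_values n \<tau> b" "int n + 1 \<in> prefix_values n \<tau> b"
    using b unfolding prefix_values_def by auto
  have succ: "is_succ_in (prefix_values n \<tau> b) (int (\<tau> b)) (nxt (int (\<tau> b)))"
    and pred: "is_pred_in (prefix_values n \<tau> b) (int (\<tau> b)) (prv (int (\<tau> b)))"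
    using L mem(1) \<tau>b unfolding linked_list_def by auto
  have fin: "finite (prefix_values n \<tau> b)"
    unfolding prefix_values_def by simp
  show "nxt (int (\<tau> b)) = left_succ n \<tau> b"
    using is_succ_in_unique[OF succ is_succ_in_Min[OF fin mem(3)]] \<tau>b
    by (simp add: left_succ_eq_Min_prefix_values)
  show "prv (int (\<tau> b)) = left_pred n \<tau> b"
    using is_pred_in_unique[OF pred is_pred_in_Max[OF fin mem(2)]] \<tau>b
    by (simp add: left_pred_eq_Max_prefix_values)
qed

lemma linked_list_prefix_values_delete:
  assumes bij: "bij_betw \<tau> {1..n} {1..n}" and b: "b \<in> {1..n}"
    and L: "linked_list (prefix_values n \<tau> b) 0 (int n + 1) nxt prv"
  shows "linked_list (prefix_values n \<tau> (b - 1)) 0 (int n + 1)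
    (nxt(left_pred n \<tau> b := left_succ n \<tau> b)) (prv(left_succ n \<tau> b := left_pred n \<tau> b))"
proof -
  have "\<tau> b \<in> {1..n}"
    using bij b by (auto dest: bij_betwE)
  moreover have "int (\<tau> b) \<in> prefix_values n \<tau> b"
    using b unfolding prefix_values_def by auto
  ultimately show ?thesis
    using linked_list_delete[OF L, of "int (\<tau> b)"] prefix_values_links[OF assms]
      prefix_values_pred[OF bij b]
    by simp
qed

section \<open>Execution within a time bound\<close>

definition runs_within :: "com \<Rightarrow> state \<Rightarrow> nat \<Rightarrow> (state \<Rightarrow> bool) \<Rightarrow> bool" where
  "runs_within c s k Q \<longleftrightarrow> (\<exists>t s'. exec c s t s' \<and> t \<le> k \<and> Q s')"

lemma runs_within_mono:
  assumes "runs_within c s k Q" "k \<le> k'" "\<And>s'. Q s' \<Longrightarrow> Q' s'"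
  shows "runs_within c s k' Q'"
  using assms unfolding runs_within_def by (meson order_trans)

lemma runs_within_Seq:
  assumes "runs_within c1 s k1 Q1" "\<And>s1. Q1 s1 \<Longrightarrow> runs_within c2 s1 k2 Q2"
  shows "runs_within (Seq c1 c2) s (k1 + k2 + 1) Q2"
  using assms unfolding runs_within_def by (fastforce intro: exec.Seq)

fun loop_free :: "com \<Rightarrow> bool" where
  "loop_free (Seq c1 c2) \<longleftrightarrow> loop_free c1 \<and> loop_free c2"
| "loop_free (If b c1 c2) \<longleftrightarrow> loop_free c1 \<and> loop_free c2"
| "loop_free (While b c) \<longleftrightarrow> False"
| "loop_free _ \<longleftrightarrow> True"

text \<open>The While clause is a dummy: only loop-free commands are meant to be evaluated.\<close>
fun run_loop_free :: "com \<Rightarrow> state \<Rightarrow> nat \<times> state" where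
  "run_loop_free Skip s = (1, s)"
| "run_loop_free (Assign x a) s = (1, ((fst s)(x := aval a s), snd s))"
| "run_loop_free (ASet x i a) s = (1, (fst s, (snd s)(x := (snd s x)(aval i s := aval a s))))"
| "run_loop_free (Seq c1 c2) s =
     (let (t1, s1) = run_loop_free c1 s; (t2, s2) = run_loop_free c2 s1 in (t1 + t2 + 1, s2))"
| "run_loop_free (If b c1 c2) s =
     (let (t, s') = run_loop_free (if bval b s then c1 else c2) s in (t + 1, s'))"
| "run_loop_free (While b c) s = (0, s)"

lemma exec_run_loop_free:
  "loop_free c \<Longrightarrow> exec c s (fst (run_loop_free c s)) (snd (run_loop_free c s))"
proof (induction c arbitrary: s)
  case (Seq c1 c2)
  then have "exec (Seq c1 c2) s
      (fst (run_loop_free c1 s) + fst (run_loop_free c2 (snd (run_loop_free c1 s))) + 1)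
      (snd (run_loop_free c2 (snd (run_loop_free c1 s))))"
    using Seq.IH Seq.prems exec.Seq by (metis Suc_eq_plus1 loop_free.simps(1))
  then show ?case
    by (simp add: split_beta)
next
  case (If b c1 c2)
  then show ?case
    using exec.IfT[of b s c1] exec.IfF[of b s c2] by (auto simp: split_beta)
qed (auto intro: exec.intros[simplified])

lemma runs_within_loop_free:
  assumes "loop_free c" "fst (run_loop_free c s) \<le> k" "Q (snd (run_loop_free c s))"
  shows "runs_within c s k Q"
  using assms exec_run_loop_free unfolding runs_within_def by blast

lemma runs_within_While:
  fixes \<mu> :: "state \<Rightarrow> nat"
  assumes "I s"
    and body: "\<And>r. I r \<Longrightarrow> bval b r \<Longrightarrow> runs_within c r k (\<lambda>r'. I r' \<and> \<mu> r' < \<mu> r)"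
  shows "runs_within (While b c) s ((k + 1) * \<mu> s + 1) (\<lambda>s'. I s' \<and> \<not> bval b s')"
  using assms(1)
proof (induction "\<mu> s" arbitrary: s rule: less_induct)
  case less
  show ?case
  proof (cases "bval b s")
    case False
    then show ?thesis
      using less.prems exec.WhileF unfolding runs_within_def by fastforce
  next
    case True
    then obtain t1 s1 where s1: "exec c s t1 s1" "t1 \<le> k" "I s1" "\<mu> s1 < \<mu> s"
      using body less.prems unfolding runs_within_def by blast
    then obtain t2 s2 where s2: "exec (While b c) s1 t2 s2" "t2 \<le> (k + 1) * \<mu> s1 + 1"
        "I s2" "\<not> bval b s2"
      using less.hyps unfolding runs_within_def by blast
    have "(k + 1) * \<mu> s1 + (k + 1) \<le> (k + 1) * \<mu> s"
      using mult_le_mono2[OF Suc_leI[OF s1(4)], of "k + 1"] by simp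
    then have "t1 + t2 + 1 \<le> (k + 1) * \<mu> s + 1"
      using s1(2) s2(2) by linarith
    then show ?thesis
      using exec.WhileT[OF True s1(1) s2(1)] s2(3,4) unfolding runs_within_def by blast
  qed
qed

definition for_loop :: "com \<Rightarrow> com" where
  "for_loop B = Seq (Assign ''c'' (N 1))
     (While (Less (V ''c'') (Plus (V ''n'') (N 1))) (Seq B (Assign ''c'' (Plus (V ''c'') (N 1)))))"

lemma runs_within_for_loop:
  fixes I :: "nat \<Rightarrow> state \<Rightarrow> bool"
  assumes n: "fst s ''n'' = int n"
    and init: "I 1 ((fst s)(''c'' := 1), snd s)"
    and body: "\<And>C r. C \<in> {1..n} \<Longrightarrow> fst r ''n'' = int n \<Longrightarrow> fst r ''c'' = int C \<Longrightarrow> I C r \<Longrightarrow>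
      runs_within B r k (\<lambda>r'. fst r' ''n'' = int n \<and> fst r' ''c'' = int C \<and>
        I (Suc C) ((fst r')(''c'' := int C + 1), snd r'))"
  shows "runs_within (for_loop B) s ((k + 3) * n + 3) (\<lambda>s'. fst s' ''n'' = int n \<and> I (Suc n) s')"
proof -
  define J :: "state \<Rightarrow> bool" where "J r \<longleftrightarrow> (\<exists>C\<in>{1..Suc n}. fst r ''n'' = int n \<and> fst r ''c'' = int C \<and> I C r)"
    for r
  define \<mu> :: "state \<Rightarrow> nat" where "\<mu> r = nat (int n + 1 - fst r ''c'')" for r
  let ?test = "Less (V ''c'') (Plus (V ''n'') (N 1))"
  let ?incr = "Assign ''c'' (Plus (V ''c'') (N 1))"
  have loop: "runs_within (While ?test (Seq B ?incr)) r (((k + 1 + 1) + 1) * \<mu> r + 1)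
      (\<lambda>r'. J r' \<and> \<not> bval ?test r')" if "J r" for r
    using that
  proof (rule runs_within_While)
    fix r assume "J r" "bval ?test r"
    then obtain C where C: "C \<in> {1..n}" "fst r ''n'' = int n" "fst r ''c'' = int C" "I C r"
      unfolding J_def by auto
    show "runs_within (Seq B ?incr) r (k + 1 + 1) (\<lambda>r'. J r' \<and> \<mu> r' < \<mu> r)"
    proof (rule runs_within_Seq[OF body[OF C]])
      fix r' assume "fst r' ''n'' = int n \<and> fst r' ''c'' = int C \<and>
        I (Suc C) ((fst r')(''c'' := int C + 1), snd r')"
      then show "runs_within ?incr r' 1 (\<lambda>r'. J r' \<and> \<mu> r' < \<mu> r)"
        using C by (intro runs_within_loop_free) (auto simp: J_def \<mu>_def intro!: bexI[of _ "Suc C"])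
    qed
  qed
  have "runs_within (Assign ''c'' (N 1)) s 1 (\<lambda>r. J r \<and> \<mu> r = n)"
    using n init by (intro runs_within_loop_free) (auto simp: J_def \<mu>_def)
  then have "runs_within (for_loop B) s (1 + (((k + 1 + 1) + 1) * n + 1) + 1)
      (\<lambda>r. J r \<and> \<not> bval ?test r)"
    unfolding for_loop_def by (rule runs_within_Seq) (use loop in force)
  then show ?thesis
    by (rule runs_within_mono) (auto simp: J_def algebra_simps le_Suc_eq)
qed

lemma runs_within_for_loop_arrays:
  fixes W :: "vname set" and F :: "vname \<Rightarrow> nat \<Rightarrow> int"
  assumes n: "fst s ''n'' = int n" and B: "loop_free B"
    and body: "\<And>C r. C \<in> {1..n} \<Longrightarrow> fst r ''c'' = int C \<Longrightarrow> fst r ''n'' = int n \<Longrightarrow>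
      (\<forall>x. x \<notin> W \<longrightarrow> snd r x = snd s x) \<Longrightarrow>
      fst (run_loop_free B r) \<le> k \<and> fst (snd (run_loop_free B r)) = fst r \<and>
      (\<forall>x. snd (snd (run_loop_free B r)) x = (if x \<in> W then (snd r x)(int C := F x C) else snd r x))"
  shows "runs_within (for_loop B) s ((k + 3) * n + 3) (\<lambda>s'. fst s' ''n'' = int n \<and>
    (\<forall>x. x \<notin> W \<longrightarrow> snd s' x = snd s x) \<and> (\<forall>x\<in>W. \<forall>b\<in>{1..n}. snd s' x (int b) = F x b))"
proof -
  define I :: "nat \<Rightarrow> state \<Rightarrow> bool" where "I C r \<longleftrightarrow> (\<forall>x. x \<notin> W \<longrightarrow> snd r x = snd s x) \<and>
    (\<forall>x\<in>W. \<forall>b\<in>{1..<C}. snd r x (int b) = F x b)" for C r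
  have "runs_within (for_loop B) s ((k + 3) * n + 3) (\<lambda>s'. fst s' ''n'' = int n \<and> I (Suc n) s')"
  proof (rule runs_within_for_loop[OF n])
    show "I 1 ((fst s)(''c'' := 1), snd s)"
      by (simp add: I_def)
    fix C r assume C: "C \<in> {1..n}" "fst r ''n'' = int n" "fst r ''c'' = int C" and "I C r"
    then show "runs_within B r k (\<lambda>r'. fst r' ''n'' = int n \<and> fst r' ''c'' = int C \<and>
        I (Suc C) ((fst r')(''c'' := int C + 1), snd r'))"
      using body[of C r] B by (intro runs_within_loop_free) (auto simp: I_def less_Suc_eq)
  qed
  then show ?thesis
    by (rule runs_within_mono) (auto simp: I_def)
qed

section \<open>The classification program\<close>

definition init_links :: com where
  "init_links =
     Seq (for_loop (Seq (ASet ''nx'' (V ''c'') (Plus (V ''c'') (N 1)))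
                        (ASet ''pv'' (V ''c'') (Minus (V ''c'') (N 1)))))
       (Seq (ASet ''nx'' (N 0) (N 1)) (ASet ''pv'' (Plus (V ''n'') (N 1)) (V ''n'')))"

lemma runs_within_init_links:
  assumes n: "fst s ''n'' = int n"
  shows "runs_within init_links s (6 * n + 7) (\<lambda>s'. fst s' ''n'' = int n \<and>
    (\<forall>x. x \<notin> {''nx'', ''pv''} \<longrightarrow> snd s' x = snd s x) \<and>
    linked_list {0..int n + 1} 0 (int n + 1) (snd s' ''nx'') (snd s' ''pv''))"
    (is "runs_within _ _ _ ?Q")
proof -
  define F :: "vname \<Rightarrow> nat \<Rightarrow> int" where "F x C = (if x = ''nx'' then int C + 1 else int C - 1)" for x C
  have "runs_within init_links s ((3 + 3) * n + 3 + 3 + 1) ?Q"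
    unfolding init_links_def
  proof (rule runs_within_Seq[OF runs_within_for_loop_arrays[OF n, where W = "{''nx'', ''pv''}" and F = F]],
      goal_cases)
    case (3 r)
    then show ?case
      by (intro runs_within_loop_free) (simp_all add: F_def linked_list_upto)
  qed (auto simp: F_def fun_eq_iff)
  then show ?thesis
    by (rule runs_within_mono) simp_all
qed

definition scan_backward_body :: com where
  "scan_backward_body =
     Seq (Assign ''p'' (Minus (Plus (V ''n'') (N 1)) (V ''c'')))
    (Seq (Assign ''x'' (Get ''a'' (V ''p'')))
    (Seq (Assign ''y'' (Get ''nx'' (V ''x'')))
    (Seq (Assign ''z'' (Get ''pv'' (V ''x'')))
    (Seq (ASet ''mm'' (V ''p'') (V ''y''))
    (Seq (ASet ''qq'' (V ''p'') (V ''z''))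
    (Seq (ASet ''nx'' (V ''z'') (V ''y''))
         (ASet ''pv'' (V ''y'') (V ''z''))))))))"

definition scan_backward :: com where
  "scan_backward = for_loop scan_backward_body"

lemma runs_within_scan_backward:
  assumes n: "fst s ''n'' = int n" and bij: "bij_betw \<tau> {1..n} {1..n}"
    and a: "\<forall>i\<in>{1..n}. snd s ''a'' (int i) = int (\<tau> i)"
    and L: "linked_list {0..int n + 1} 0 (int n + 1) (snd s ''nx'') (snd s ''pv'')"
  shows "runs_within scan_backward s (18 * n + 3) (\<lambda>s'. fst s' ''n'' = int n \<and>
    (\<forall>x. x \<notin> {''nx'', ''pv'', ''mm'', ''qq''} \<longrightarrow> snd s' x = snd s x) \<and>
    (\<forall>b\<in>{1..n}. snd s' ''mm'' (int b) = left_succ n \<tau> b \<and> snd s' ''qq'' (int b) = left_pred n \<tau> b))"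
proof -
  define I :: "nat \<Rightarrow> state \<Rightarrow> bool" where
    "I C r \<longleftrightarrow> (\<forall>x. x \<notin> {''nx'', ''pv'', ''mm'', ''qq''} \<longrightarrow> snd r x = snd s x) \<and>
      linked_list (prefix_values n \<tau> (n + 1 - C)) 0 (int n + 1) (snd r ''nx'') (snd r ''pv'') \<and>
      (\<forall>b\<in>{n + 1 - C<..n}.
        snd r ''mm'' (int b) = left_succ n \<tau> b \<and> snd r ''qq'' (int b) = left_pred n \<tau> b)" for C r
  have "runs_within scan_backward s ((15 + 3) * n + 3)
    (\<lambda>s'. fst s' ''n'' = int n \<and> I (Suc n) s')"
    unfolding scan_backward_def
  proof (rule runs_within_for_loop[OF n])
    show "I 1 ((fst s)(''c'' := 1), snd s)"
      using L prefix_values_all[OF bij] by (simp add: I_def)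
  next
    fix C r assume C: "C \<in> {1..n}" and r: "fst r ''n'' = int n" "fst r ''c'' = int C" "I C r"
    define b where "b = n + 1 - C"
    have b: "b \<in> {1..n}" "int n + 1 - int C = int b" "n + 1 - Suc C = b - 1"
      using C unfolding b_def by auto
    have frame: "\<forall>x. x \<notin> {''nx'', ''pv'', ''mm'', ''qq''} \<longrightarrow> snd r x = snd s x"
      and L': "linked_list (prefix_values n \<tau> b) 0 (int n + 1) (snd r ''nx'') (snd r ''pv'')"
      and processed: "\<forall>b'\<in>{b<..n}.
        snd r ''mm'' (int b') = left_succ n \<tau> b' \<and> snd r ''qq'' (int b') = left_pred n \<tau> b'"
      using r(3) unfolding I_def b_def by auto
    have ab: "snd r ''a'' (int b) = int (\<tau> b)" "snd s ''a'' (int b) = int (\<tau> b)"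
      using frame a b(1) by auto
    note links = prefix_values_links[OF bij b(1) L']
    note deleted = linked_list_prefix_values_delete[OF bij b(1) L']
    have range: "{b - 1<..n} = insert b {b<..n}"
      using b(1) by auto
    show "runs_within scan_backward_body r 15 (\<lambda>r'. fst r' ''n'' = int n \<and> fst r' ''c'' = int C \<and>
      I (Suc C) ((fst r')(''c'' := int C + 1), snd r'))"
      using frame deleted processed unfolding I_def b(3) range
      by (intro runs_within_loop_free) (simp_all add: scan_backward_body_def r b(2) ab links)
  qed
  then show ?thesis
    by (rule runs_within_mono) (auto simp: I_def)
qed

definition scan_forward_body :: com where
  "scan_forward_body =
     Seq (Assign ''x'' (Get ''a'' (V ''c'')))
    (Seq (If (Less (V ''mn'') (V ''x'')) (ASet ''f'' (V ''c'') (N 1)) (ASet ''f'' (V ''c'') (N 0)))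
    (Seq (If (Less (V ''x'') (V ''mx'')) (ASet ''g'' (V ''c'') (N 1)) (ASet ''g'' (V ''c'') (N 0)))
    (Seq (If (Less (Get ''mm'' (V ''c'')) (V ''mn'')) (Assign ''mn'' (Get ''mm'' (V ''c''))) Skip)
         (If (Less (V ''mx'') (Get ''qq'' (V ''c''))) (Assign ''mx'' (Get ''qq'' (V ''c''))) Skip))))"

lemma run_scan_forward_body:
  assumes "fst r ''c'' = int C"
  defines "mn \<equiv> fst r ''mn''" and "mx \<equiv> fst r ''mx''" and "x \<equiv> snd r ''a'' (int C)"
  shows "run_loop_free scan_forward_body r = (13,
    ((fst r)(''x'' := x, ''mn'' := min mn (snd r ''mm'' (int C)), ''mx'' := max mx (snd r ''qq'' (int C))),
     (snd r)(''f'' := (snd r ''f'')(int C := of_bool (mn < x)),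
             ''g'' := (snd r ''g'')(int C := of_bool (x < mx)))))"
  using assms by (auto simp: scan_forward_body_def fun_eq_iff min_def max_def)


text \<open>The registers ''mn'' and ''mx'' hold the running minimum of left_succ and maximum
of left_pred; they are pinned down only through comparisons with the values that matter.\<close>
definition forward_invariant :: "nat \<Rightarrow> (nat \<Rightarrow> nat) \<Rightarrow> state \<Rightarrow> nat \<Rightarrow> state \<Rightarrow> bool" where
  "forward_invariant n \<tau> s C r \<longleftrightarrow>
     (\<forall>x. x \<notin> {''f'', ''g''} \<longrightarrow> snd r x = snd s x) \<and>
     (\<forall>v \<le> int n + 1. fst r ''mn'' < v \<longleftrightarrow> (\<exists>b\<in>{1..<C}. left_succ n \<tau> b < v)) \<and>
     (\<forall>v \<ge> 0. v < fst r ''mx'' \<longleftrightarrow> (\<exists>b\<in>{1..<C}. v < left_pred n \<tau> b)) \<and>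
     (\<forall>b\<in>{1..<C}. snd r ''f'' (int b) = of_bool (is_NE n \<tau> b) \<and>
       snd r ''g'' (int b) = of_bool (is_SE n \<tau> b))"

lemma runs_within_scan_forward_body:
  assumes \<tau>: "\<forall>i\<in>{1..n}. \<tau> i \<le> n"
    and a: "\<forall>i\<in>{1..n}. snd s ''a'' (int i) = int (\<tau> i)"
    and mm: "\<forall>b\<in>{1..n}. snd s ''mm'' (int b) = left_succ n \<tau> b \<and> snd s ''qq'' (int b) = left_pred n \<tau> b"
    and C: "C \<in> {1..n}" and r: "fst r ''n'' = int n" "fst r ''c'' = int C"
    and inv: "forward_invariant n \<tau> s C r"
  shows "runs_within scan_forward_body r 13 (\<lambda>r'. fst r' ''n'' = int n \<and> fst r' ''c'' = int C \<and>
    forward_invariant n \<tau> s (Suc C) ((fst r')(''c'' := int C + 1), snd r'))"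
proof -
  have frame: "\<forall>x. x \<notin> {''f'', ''g''} \<longrightarrow> snd r x = snd s x"
    and mn: "\<forall>v \<le> int n + 1. fst r ''mn'' < v \<longleftrightarrow> (\<exists>b\<in>{1..<C}. left_succ n \<tau> b < v)"
    and mx: "\<forall>v \<ge> 0. v < fst r ''mx'' \<longleftrightarrow> (\<exists>b\<in>{1..<C}. v < left_pred n \<tau> b)"
    and processed: "\<forall>b\<in>{1..<C}. snd r ''f'' (int b) = of_bool (is_NE n \<tau> b) \<and>
      snd r ''g'' (int b) = of_bool (is_SE n \<tau> b)"
    using inv unfolding forward_invariant_def by auto
  have x: "snd r ''a'' (int C) = int (\<tau> C)" "snd s ''a'' (int C) = int (\<tau> C)"
    and M: "snd r ''mm'' (int C) = left_succ n \<tau> C" "snd r ''qq'' (int C) = left_pred n \<tau> C"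
      "snd s ''mm'' (int C) = left_succ n \<tau> C" "snd s ''qq'' (int C) = left_pred n \<tau> C"
    and \<tau>C: "\<tau> C \<le> n"
    using frame a \<tau> mm C by auto
  have NE: "fst r ''mn'' < int (\<tau> C) \<longleftrightarrow> is_NE n \<tau> C"
    using mn \<tau>C C is_NE_iff_left_succ[of C n \<tau>] by auto
  have SE: "int (\<tau> C) < fst r ''mx'' \<longleftrightarrow> is_SE n \<tau> C"
    using mx C is_SE_iff_left_pred[of C n \<tau>] by auto
  have range: "{1..<Suc C} = insert C {1..<C}"
    using C by auto
  have mn': "\<forall>v \<le> int n + 1. min (fst r ''mn'') (left_succ n \<tau> C) < v \<longleftrightarrow>
      (\<exists>b\<in>{1..<Suc C}. left_succ n \<tau> b < v)"
    using mn unfolding range by (auto simp: min_less_iff_disj)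
  have mx': "\<forall>v \<ge> 0. v < max (fst r ''mx'') (left_pred n \<tau> C) \<longleftrightarrow>
      (\<exists>b\<in>{1..<Suc C}. v < left_pred n \<tau> b)"
    using mx unfolding range by (auto simp: less_max_iff_disj)
  have processed': "\<forall>b\<in>{1..<Suc C}.
      ((snd r ''f'')(int C := of_bool (fst r ''mn'' < int (\<tau> C)))) (int b) = of_bool (is_NE n \<tau> b) \<and>
      ((snd r ''g'')(int C := of_bool (int (\<tau> C) < fst r ''mx''))) (int b) = of_bool (is_SE n \<tau> b)"
    using processed NE SE unfolding range by auto
  have "loop_free scan_forward_body"
    by (simp add: scan_forward_body_def)
  then show ?thesis
    using frame mn' mx' processed' unfolding forward_invariant_def
    by (intro runs_within_loop_free) (simp_all add: run_scan_forward_body[OF r(2)] r x M)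
qed

definition scan_forward :: com where
  "scan_forward =
     Seq (Assign ''mn'' (Plus (V ''n'') (N 1))) (Seq (Assign ''mx'' (N 0)) (for_loop scan_forward_body))"

lemma runs_within_scan_forward:
  assumes n: "fst s ''n'' = int n" and \<tau>: "\<forall>i\<in>{1..n}. \<tau> i \<le> n"
    and a: "\<forall>i\<in>{1..n}. snd s ''a'' (int i) = int (\<tau> i)"
    and mm: "\<forall>b\<in>{1..n}. snd s ''mm'' (int b) = left_succ n \<tau> b \<and> snd s ''qq'' (int b) = left_pred n \<tau> b"
  shows "runs_within scan_forward s (16 * n + 7) (\<lambda>s'. fst s' ''n'' = int n \<and>
    (\<forall>x. x \<notin> {''f'', ''g''} \<longrightarrow> snd s' x = snd s x) \<and>
    (\<forall>b\<in>{1..n}. snd s' ''f'' (int b) = of_bool (is_NE n \<tau> b) \<and> snd s' ''g'' (int b) = of_bool (is_SE n \<tau> b)))"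
proof -
  have init_mn: "runs_within (Assign ''mn'' (Plus (V ''n'') (N 1))) s 1
      (\<lambda>r. fst r ''n'' = int n \<and> fst r ''mn'' = int n + 1 \<and> snd r = snd s)"
    using n by (intro runs_within_loop_free) simp_all
  have init_mx: "runs_within (Assign ''mx'' (N 0)) r 1
      (\<lambda>r'. fst r' ''n'' = int n \<and> forward_invariant n \<tau> s 1 ((fst r')(''c'' := 1), snd r'))"
    if "fst r ''n'' = int n \<and> fst r ''mn'' = int n + 1 \<and> snd r = snd s" for r
    using that by (intro runs_within_loop_free) (simp_all add: forward_invariant_def)
  have "runs_within scan_forward s (1 + (1 + ((13 + 3) * n + 3) + 1) + 1)
      (\<lambda>s'. fst s' ''n'' = int n \<and> forward_invariant n \<tau> s (Suc n) s')"
    unfolding scan_forward_def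
    using runs_within_scan_forward_body[OF \<tau> a mm]
    by (intro runs_within_Seq[OF init_mn runs_within_Seq[OF init_mx]] runs_within_for_loop) auto
  then show ?thesis
    by (rule runs_within_mono) (auto simp: forward_invariant_def)
qed

definition classify_pass :: com where
  "classify_pass = Seq init_links (Seq scan_backward scan_forward)"

lemma runs_within_classify_pass:
  assumes n: "fst s ''n'' = int n" and bij: "bij_betw \<tau> {1..n} {1..n}"
    and a: "\<forall>i\<in>{1..n}. snd s ''a'' (int i) = int (\<tau> i)"
  shows "runs_within classify_pass s (40 * n + 19) (\<lambda>s'. fst s' ''n'' = int n \<and>
    (\<forall>x. x \<notin> {''nx'', ''pv'', ''mm'', ''qq'', ''f'', ''g''} \<longrightarrow> snd s' x = snd s x) \<and>
    (\<forall>b\<in>{1..n}. snd s' ''f'' (int b) = of_bool (is_NE n \<tau> b) \<and> snd s' ''g'' (int b) = of_bool (is_SE n \<tau> b)))"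
    (is "runs_within _ _ _ ?Q")
proof -
  have "runs_within classify_pass s ((6 * n + 7) + ((18 * n + 3) + (16 * n + 7) + 1) + 1) ?Q"
    unfolding classify_pass_def
  proof (rule runs_within_Seq[OF runs_within_init_links[OF n]])
    fix s1 assume s1: "fst s1 ''n'' = int n \<and> (\<forall>x. x \<notin> {''nx'', ''pv''} \<longrightarrow> snd s1 x = snd s x) \<and>
      linked_list {0..int n + 1} 0 (int n + 1) (snd s1 ''nx'') (snd s1 ''pv'')"
    then have a1: "\<forall>i\<in>{1..n}. snd s1 ''a'' (int i) = int (\<tau> i)"
      using a by simp
    show "runs_within (Seq scan_backward scan_forward) s1
      ((18 * n + 3) + (16 * n + 7) + 1) ?Q"
    proof (rule runs_within_Seq[OF runs_within_scan_backward[OF _ bij a1]])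
      fix s2 assume s2: "fst s2 ''n'' = int n \<and>
        (\<forall>x. x \<notin> {''nx'', ''pv'', ''mm'', ''qq''} \<longrightarrow> snd s2 x = snd s1 x) \<and>
        (\<forall>b\<in>{1..n}. snd s2 ''mm'' (int b) = left_succ n \<tau> b \<and> snd s2 ''qq'' (int b) = left_pred n \<tau> b)"
      have "\<forall>i\<in>{1..n}. \<tau> i \<le> n"
        using bij by (auto dest: bij_betwE)
      moreover have "\<forall>i\<in>{1..n}. snd s2 ''a'' (int i) = int (\<tau> i)"
        using s2 a1 by simp
      ultimately show "runs_within scan_forward s2 (16 * n + 7) ?Q"
        using s1 s2 by (intro runs_within_mono[OF runs_within_scan_forward]) auto
    qed (use s1 in auto)
  qed
  then show ?thesis
    by (rule runs_within_mono) auto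
qed

definition copy_input :: com where
  "copy_input = for_loop (ASet ''a'' (V ''c'') (Get ''in'' (V ''c'')))"

lemma runs_within_copy_input:
  assumes n: "fst s ''n'' = int n" and input: "\<forall>i\<in>{1..n}. snd s ''in'' (int i) = int (\<sigma> i)"
  shows "runs_within copy_input s (4 * n + 3) (\<lambda>s'. fst s' ''n'' = int n \<and>
    (\<forall>x. x \<notin> {''a''} \<longrightarrow> snd s' x = snd s x) \<and> (\<forall>i\<in>{1..n}. snd s' ''a'' (int i) = int (\<sigma> i)))"
  unfolding copy_input_def
  by (rule runs_within_mono[OF runs_within_for_loop_arrays[OF n,
        where W = "{''a''}" and F = "\<lambda>_ C. int (\<sigma> C)" and k = 1]])
    (use input in \<open>auto simp: fun_eq_iff\<close>)

definition save_and_reverse :: com where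
  "save_and_reverse = for_loop
     (Seq (ASet ''ne'' (V ''c'') (Get ''f'' (V ''c'')))
     (Seq (ASet ''se'' (V ''c'') (Get ''g'' (V ''c'')))
          (ASet ''a'' (V ''c'') (Get ''in'' (Minus (Plus (V ''n'') (N 1)) (V ''c''))))))"

lemma runs_within_save_and_reverse:
  assumes n: "fst s ''n'' = int n" and input: "\<forall>i\<in>{1..n}. snd s ''in'' (int i) = int (\<sigma> i)"
  shows "runs_within save_and_reverse s (8 * n + 3) (\<lambda>s'. fst s' ''n'' = int n \<and>
    (\<forall>x. x \<notin> {''ne'', ''se'', ''a''} \<longrightarrow> snd s' x = snd s x) \<and>
    (\<forall>i\<in>{1..n}. snd s' ''ne'' (int i) = snd s ''f'' (int i) \<and> snd s' ''se'' (int i) = snd s ''g'' (int i) \<and>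
      snd s' ''a'' (int i) = int (\<sigma> (n + 1 - i))))"
proof -
  define F :: "vname \<Rightarrow> nat \<Rightarrow> int" where
    "F x C = (if x = ''ne'' then snd s ''f'' (int C) else if x = ''se'' then snd s ''g'' (int C)
      else int (\<sigma> (n + 1 - C)))" for x C
  have "snd s ''in'' (int n + 1 - int C) = int (\<sigma> (n + 1 - C))" if "C \<in> {1..n}" for C
  proof -
    have "n + 1 - C \<in> {1..n}" and idx: "int n + 1 - int C = int (n + 1 - C)"
      using that by auto
    then show ?thesis
      unfolding idx using input by blast
  qed
  then show ?thesis
    unfolding save_and_reverse_def
    by (intro runs_within_mono[OF runs_within_for_loop_arrays[OF n,
          where W = "{''ne'', ''se'', ''a''}" and F = F and k = 5]])
      (auto simp: fun_eq_iff F_def)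
qed

definition combine_types :: com where
  "combine_types = for_loop
     (If (Eq (Get ''ne'' (V ''c'')) (N 1)) (ASet ''out'' (V ''c'') (N 1))
     (If (Eq (Get ''f'' (Minus (Plus (V ''n'') (N 1)) (V ''c''))) (N 1)) (ASet ''out'' (V ''c'') (N 2))
     (If (Eq (Get ''g'' (Minus (Plus (V ''n'') (N 1)) (V ''c''))) (N 1)) (ASet ''out'' (V ''c'') (N 3))
     (If (Eq (Get ''se'' (V ''c'')) (N 1)) (ASet ''out'' (V ''c'') (N 4)) (ASet ''out'' (V ''c'') (N 0))))))"

lemma runs_within_combine_types:
  assumes n: "fst s ''n'' = int n"
  shows "runs_within combine_types s (8 * n + 3) (\<lambda>s'. \<forall>i\<in>{1..n}. snd s' ''out'' (int i) =
    (if snd s ''ne'' (int i) = 1 then 1 else if snd s ''f'' (int n + 1 - int i) = 1 then 2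
     else if snd s ''g'' (int n + 1 - int i) = 1 then 3 else if snd s ''se'' (int i) = 1 then 4 else 0))"
proof -
  define F :: "vname \<Rightarrow> nat \<Rightarrow> int" where
    "F x C = (if snd s ''ne'' (int C) = 1 then 1 else if snd s ''f'' (int n + 1 - int C) = 1 then 2
      else if snd s ''g'' (int n + 1 - int C) = 1 then 3 else if snd s ''se'' (int C) = 1 then 4 else 0)"
    for x C
  show ?thesis
    unfolding combine_types_def
    by (rule runs_within_mono[OF runs_within_for_loop_arrays[OF n,
          where W = "{''out''}" and F = F and k = 5]])
      (auto simp: fun_eq_iff F_def)
qed

definition classify_both_ways :: com where
  "classify_both_ways = Seq copy_input (Seq classify_pass (Seq save_and_reverse classify_pass))"

lemma runs_within_classify_both_ways:
  assumes n: "fst s ''n'' = int n" and bij: "bij_betw \<sigma> {1..n} {1..n}"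
    and input: "\<forall>i\<in>{1..n}. snd s ''in'' (int i) = int (\<sigma> i)"
  shows "runs_within classify_both_ways s (92 * n + 47) (\<lambda>s'. fst s' ''n'' = int n \<and>
    (\<forall>i\<in>{1..n}. snd s' ''ne'' (int i) = of_bool (is_NE n \<sigma> i) \<and> snd s' ''se'' (int i) = of_bool (is_SE n \<sigma> i) \<and>
      snd s' ''f'' (int i) = of_bool (is_NE n (\<lambda>i. \<sigma> (n + 1 - i)) i) \<and>
      snd s' ''g'' (int i) = of_bool (is_SE n (\<lambda>i. \<sigma> (n + 1 - i)) i)))"
    (is "runs_within _ _ _ ?Q")
proof -
  have bij_rev: "bij_betw (\<lambda>i. \<sigma> (n + 1 - i)) {1..n} {1..n}"
    using bij_betw_trans[OF bij_betw_reverse bij] by (simp add: comp_def)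
  have "runs_within classify_both_ways s
      ((4 * n + 3) + ((40 * n + 19) + ((8 * n + 3) + (40 * n + 19) + 1) + 1) + 1) ?Q"
    unfolding classify_both_ways_def
  proof (rule runs_within_Seq[OF runs_within_copy_input[OF n input]], goal_cases)
    case (1 s1)
    then have n1: "fst s1 ''n'' = int n" and a1: "\<forall>i\<in>{1..n}. snd s1 ''a'' (int i) = int (\<sigma> i)"
      and in1: "\<forall>i\<in>{1..n}. snd s1 ''in'' (int i) = int (\<sigma> i)"
      using input by auto
    show ?case
    proof (rule runs_within_Seq[OF runs_within_classify_pass[OF n1 bij a1]], goal_cases)
      case (1 s2)
      then have n2: "fst s2 ''n'' = int n" and in2: "\<forall>i\<in>{1..n}. snd s2 ''in'' (int i) = int (\<sigma> i)"
        and types2: "\<forall>i\<in>{1..n}. snd s2 ''f'' (int i) = of_bool (is_NE n \<sigma> i) \<and>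
          snd s2 ''g'' (int i) = of_bool (is_SE n \<sigma> i)"
        using in1 by auto
      show ?case
      proof (rule runs_within_Seq[OF runs_within_save_and_reverse[OF n2 in2]], goal_cases)
        case (1 s3)
        then have n3: "fst s3 ''n'' = int n"
          and a3: "\<forall>i\<in>{1..n}. snd s3 ''a'' (int i) = int (\<sigma> (n + 1 - i))"
          and saved: "\<forall>i\<in>{1..n}. snd s3 ''ne'' (int i) = of_bool (is_NE n \<sigma> i) \<and>
            snd s3 ''se'' (int i) = of_bool (is_SE n \<sigma> i)"
          using types2 by auto
        show ?case
          using saved by (intro runs_within_mono[OF runs_within_classify_pass[OF n3 bij_rev a3]]) auto
      qed
    qed
  qed
  then show ?thesis
    by (rule runs_within_mono) auto
qed

definition classify_program :: com where
  "classify_program = Seq classify_both_ways combine_types"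

lemma runs_within_classify_program:
  assumes perm: "\<sigma> permutes {1..n}" and input: "input_ok n \<sigma> s"
  shows "runs_within classify_program s (100 * n + 100) (output_ok n \<sigma>)"
proof -
  have n: "fst s ''n'' = int n" and in_values: "\<forall>i\<in>{1..n}. snd s ''in'' (int i) = int (\<sigma> i)"
    using input unfolding input_ok_def by auto
  have "runs_within classify_program s ((92 * n + 47) + (8 * n + 3) + 1) (output_ok n \<sigma>)"
    unfolding classify_program_def
  proof (rule runs_within_Seq[OF runs_within_classify_both_ways[OF n permutes_imp_bij[OF perm] in_values]],
      goal_cases)
    case (1 s1)
    then have n1: "fst s1 ''n'' = int n"
      by simp
    show ?case
    proof (rule runs_within_mono[OF runs_within_combine_types[OF n1]], goal_cases)
      case (2 s2)
      show ?case
        unfolding output_ok_def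
      proof
        fix i assume i: "i \<in> {1..n}"
        then have mirror: "n + 1 - i \<in> {1..n}" and idx: "int n + 1 - int i = int (n + 1 - i)"
          by auto
        have "snd s1 ''ne'' (int i) = of_bool (is_NE n \<sigma> i)" "snd s1 ''se'' (int i) = of_bool (is_SE n \<sigma> i)"
          using 1 i by auto
        moreover have "snd s1 ''f'' (int n + 1 - int i) = of_bool (is_NW n \<sigma> i)"
          "snd s1 ''g'' (int n + 1 - int i) = of_bool (is_SW n \<sigma> i)"
          unfolding idx using 1 mirror is_NW_iff_is_NE_reverse[OF i] is_SW_iff_is_SE_reverse[OF i] by auto
        ultimately show "snd s2 ''out'' (int i) = etype_code (elem_type n \<sigma> i)"
          using 2 i by (simp add: elem_type_def)
      qed
    qed simp
  qed
  then show ?thesis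
    by (rule runs_within_mono) auto
qed

theorem lemma2:
  "\<exists>prog :: com. \<exists>C :: nat.
     \<forall>n \<sigma> s. \<sigma> permutes {1..n} \<and> skew_merged n \<sigma> \<and> input_ok n \<sigma> s \<longrightarrow>
       (\<exists>t s'. exec prog s t s' \<and> t \<le> C * n + C \<and> output_ok n \<sigma> s')"
  using runs_within_classify_program unfolding runs_within_def by blast

end
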